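(* Let $a>0$, $\epsilon>0$, $n\in\mathbb{N}$, $\sigma_n=n^{-a}$, and consider the pendulum Lagrangian $A_n(q_1,\dot q_1)=\frac12|\dot q_1|^2+\sigma_n(1-\cos q_1)$ on $\mathbb{R}$ with associated Hamiltonian $h_n(q_1,p_1)=\frac12|p_1|^2-\sigma_n(1-\cos q_1)$. Let $t_0<\bar t_1$ and let $\bar q_1$ be the solution of the Euler–Lagrange equation of $A_n$ on $(t_0,\bar t_1)$ satisfying $\bar q_1(t_0)=0$, $\bar q_1(\bar t_1)=\pi$. Let $e(\bar t_1-t_0)$ denote its energy, i.e. $(\bar q_1,\bar p_1)\in h_n^{-1}(e(\bar t_1-t_0))$ with $\bar p_1=\dot{\bar q}_1$, and let $\omega_1=\pi/(\bar t_1-t_0)$ be the average speed of $\bar q_1$ on $(t_0,\bar t_1)$. If $|\omega_1|<n^{-\frac a2-\epsilon}$, then $$e(\bar t_1-t_0)\sim \sigma_n\exp\Big(-\frac{C\sqrt{\sigma_n}}{|\omega_1|}\Big),$$ where $C$ is a positive constant.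
   Context: The notation $f\sim g$ means $\frac1{C'}g<f<C'g$ for some constant $C'>1$ independent of $n$. *)

theory Defs
  imports Complex_Main
begin

definition sigma_n :: "real \<Rightarrow> nat \<Rightarrow> real" where
  "sigma_n a n = real n powr (-a)"

definition pendulum_hamiltonian :: "real \<Rightarrow> real \<Rightarrow> real \<Rightarrow> real" where
  "pendulum_hamiltonian \<sigma> q p = (1/2) * p^2 - \<sigma> * (1 - cos q)"

text \<open>q solves the Euler-Lagrange equation of A(q,v) = v^2/2 + sigma (1 - cos q),
  i.e. q'' = sigma sin q, on the open interval (t0,t1), with velocity qd = q';
  q is continuous on the closed interval.\<close>
definition pendulum_EL_solution ::
  "real \<Rightarrow> (real \<Rightarrow> real) \<Rightarrow> (real \<Rightarrow> real) \<Rightarrow> real \<Rightarrow> real \<Rightarrow> bool" where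
  "pendulum_EL_solution \<sigma> q qd t0 t1 \<longleftrightarrow>
     continuous_on {t0..t1} q \<and>
     (\<forall>t\<in>{t0<..<t1}. (q has_real_derivative qd t) (at t) \<and>
                       (qd has_real_derivative \<sigma> * sin (q t)) (at t))"

end

theory Submission
  imports Defs "HOL-Analysis.Complex_Transcendental"
begin

text \<open>
  Energy \<open>e\<close> is conserved along the arc and, because the arc climbs from \<open>0\<close> to \<open>pi\<close>, it is
  positive; hence \<open>q' = sqrt (2 e + 2 \<sigma> (1 - cos q)) > 0\<close> and the crossing time is
  \<open>T = \<integral>\<^sub>0\<^sup>\<pi> dq / sqrt (2 e + 2 \<sigma> (1 - cos q))\<close>. Squeezing \<open>2 (1 - cos q)\<close> between
  \<open>q\<^sup>2 - q\<^sup>4/12\<close> and \<open>q\<^sup>2\<close> compares \<open>T\<close> with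
  \<open>\<integral>\<^sub>0\<^sup>\<pi> dq / sqrt (2 e + \<sigma> q\<^sup>2) = arsinh (pi sqrt (\<sigma> / 2 e)) / sqrt \<sigma>\<close>
  up to an additive \<open>pi\<^sup>2 / (12 sqrt \<sigma>)\<close>. For a slow arc, \<open>\<omega> = pi / T < sqrt \<sigma>\<close>, the argument
  of \<open>arsinh\<close> exceeds \<open>1\<close>, where \<open>arsinh y = ln y + O(1)\<close>. Hence
  \<open>sqrt \<sigma> T = ln (sqrt (\<sigma> / e)) + O(1)\<close>, i.e. \<open>e \<sim> \<sigma> exp (-2 sqrt \<sigma> T) = \<sigma> exp (-2 pi sqrt \<sigma> / \<omega>)\<close>.
\<close>

lemma one_minus_cos_le: "1 - cos x \<le> (x::real)^2 / 2"
proof -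
  have "(sin (x/2))^2 \<le> (x/2)^2"
    using abs_sin_x_le_abs_x[of "x/2"] by (metis abs_ge_zero power2_abs power_mono)
  then show ?thesis
    using cos_double_sin[of "x/2"] by (simp add: power_divide)
qed

lemma sin_ge_cubic:
  assumes "0 \<le> x" shows "x - x^3/6 \<le> sin (x::real)"
proof -
  have "(\<lambda>x. sin x - x + x^3/6) 0 \<le> (\<lambda>x. sin x - x + x^3/6) x"
  proof (rule DERIV_nonneg_imp_nondecreasing[OF assms])
    fix u :: real
    have "0 \<le> cos u - 1 + u^2/2" using one_minus_cos_le[of u] by simp
    then show "\<exists>y. ((\<lambda>x. sin x - x + x^3/6) has_real_derivative y) (at u) \<and> 0 \<le> y"
      by (intro exI[of _ "cos u - 1 + u^2/2"])
         (auto intro!: derivative_eq_intros simp: power2_eq_square)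
  qed
  then show ?thesis by simp
qed

lemma one_minus_cos_ge: "x^2/2 - x^4/24 \<le> 1 - cos (x::real)"
proof -
  have nonneg: "y^2/2 - y^4/24 \<le> 1 - cos y" if "0 \<le> y" for y :: real
  proof -
    have "(\<lambda>x. 1 - x^2/2 + x^4/24 - cos x) 0 \<le> (\<lambda>x. 1 - x^2/2 + x^4/24 - cos x) y"
    proof (rule DERIV_nonneg_imp_nondecreasing[OF that])
      fix u :: real assume "0 \<le> u"
      then have "0 \<le> sin u - u + u^3/6" using sin_ge_cubic[of u] by simp
      then show "\<exists>y. ((\<lambda>x. 1 - x^2/2 + x^4/24 - cos x) has_real_derivative y) (at u) \<and> 0 \<le> y"
        by (intro exI[of _ "sin u - u + u^3/6"])
           (auto intro!: derivative_eq_intros simp: power2_eq_square power3_eq_cube)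
    qed
    then show ?thesis by simp
  qed
  show ?thesis
    using nonneg[of x] nonneg[of "-x"] by (cases "0 \<le> x") auto
qed

lemma pi_squared_le_10: "pi^2 \<le> 10"
proof -
  have "pi * pi \<le> 3.1416 * 3.1416" using pi_approx(2) by (intro mult_mono) auto
  then show ?thesis by (simp add: power2_eq_square)
qed

lemma DERIV_ge_imp_diff_ge:
  fixes f f' :: "real \<Rightarrow> real"
  assumes "a < b" and "continuous_on {a..b} f"
    and "\<And>t. a < t \<Longrightarrow> t < b \<Longrightarrow> (f has_real_derivative f' t) (at t)"
    and "\<And>t. a < t \<Longrightarrow> t < b \<Longrightarrow> c \<le> f' t"
  shows "c * (b - a) \<le> f b - f a"
proof -
  obtain l z where z: "a < z" "z < b" "(f has_real_derivative l) (at z)" "f b - f a = (b - a) * l"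
    using MVT[OF assms(1,2)] assms(3) real_differentiable_def by blast
  then have "l = f' z" using DERIV_unique assms(3) by blast
  then show ?thesis using z assms(1,4) by (simp add: mult.commute mult_left_mono)
qed

lemma DERIV_le_imp_diff_le:
  fixes f f' :: "real \<Rightarrow> real"
  assumes "a < b" and "continuous_on {a..b} f"
    and "\<And>t. a < t \<Longrightarrow> t < b \<Longrightarrow> (f has_real_derivative f' t) (at t)"
    and "\<And>t. a < t \<Longrightarrow> t < b \<Longrightarrow> f' t \<le> c"
  shows "f b - f a \<le> c * (b - a)"
proof -
  have "- c * (b - a) \<le> - f b - - f a"
    using assms by (intro DERIV_ge_imp_diff_ge[where f' = "\<lambda>t. - f' t"])
      (auto intro: continuous_intros derivative_intros)
  then show ?thesis by simp
qed

lemma DERIV_arsinh_scaled: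
  fixes b c :: real
  assumes "0 < b" "0 < c"
  shows "((\<lambda>x. arsinh (sqrt (c / b) * x) / sqrt c) has_real_derivative 1 / sqrt (b + c * x^2)) (at x)"
proof -
  have "((\<lambda>x. arsinh (sqrt (c / b) * x) / sqrt c) has_real_derivative
          1 / sqrt ((sqrt (c / b) * x)^2 + 1) * (sqrt (c / b) * 1) / sqrt c) (at x)"
    by (intro DERIV_cdivide DERIV_chain2[OF arsinh_real_has_field_derivative] DERIV_cmult DERIV_ident)
  moreover have "(sqrt (c / b) * x)^2 + 1 = (b + c * x^2) / b"
    using assms by (simp add: power_mult_distrib field_simps)
  ultimately show ?thesis
    using assms by (simp add: real_sqrt_divide field_simps)
qed

lemma ln_two_mult_le_arsinh:
  assumes "0 < y" shows "ln (2 * y) \<le> arsinh (y::real)"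
  using assms real_le_rsqrt[of y "y^2 + 1"] arsinh_real_aux[of y]
  by (simp add: arsinh_real_def)

lemma arsinh_le_ln_three_mult:
  assumes "1 \<le> y" shows "arsinh (y::real) \<le> ln (3 * y)"
proof -
  have "1 \<le> y^2" using assms by (simp add: one_le_power)
  then have "y^2 + 1 \<le> (2 * y)^2" by (simp add: power_mult_distrib)
  then have "sqrt (y^2 + 1) \<le> 2 * y" using assms by (intro real_le_lsqrt) auto
  then show ?thesis
    using assms arsinh_real_aux[of y] by (simp add: arsinh_real_def)
qed

lemma inverse_le_of_quartic_lower_bound:
  fixes b c p x :: real
  assumes "0 < b" "0 < c" "0 < p" "0 \<le> x" "x \<le> pi"
    and p_sq: "b + c * x^2 - c * x^4 / 12 \<le> p^2"
  shows "1 / p \<le> 1 / sqrt (b + c * x^2) + x / (6 * sqrt c)"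
proof -
  \<comment> \<open>With \<open>d = x\<^sup>2/12 \<le> pi\<^sup>2/12\<close>: \<open>p\<^sup>2 \<ge> A (1 - d)\<close> and \<open>(1 - d) (1 + 2 d)\<^sup>2 \<ge> 1\<close>, so \<open>p (1 + 2 d) \<ge> sqrt A\<close>.\<close>
  define A where "A = b + c * x^2"
  define d where "d = x^2 / 12"
  have A_pos: "0 < A" using assms by (simp add: A_def add_pos_nonneg)
  have d_nonneg: "0 \<le> d" by (simp add: d_def)
  have "x^2 \<le> 10" using power_mono[OF assms(5,4), of 2] pi_squared_le_10 by linarith
  then have "4 * d^2 \<le> 3"
    using power_mono[of d "10/12" 2] d_nonneg by (simp add: d_def power_divide)
  then have "d * (4 * d^2) \<le> d * 3" using d_nonneg by (intro mult_left_mono)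
  then have expand: "1 \<le> (1 - d) * (1 + 2 * d)^2"
    by (simp add: power2_eq_square algebra_simps)
  have "c * x^4 / 12 \<le> A * d"
    using assms by (simp add: A_def d_def power2_eq_square power4_eq_xxxx field_simps)
  then have "A * (1 - d) \<le> p^2" using p_sq by (simp add: A_def algebra_simps)
  then have "A * (1 - d) * (1 + 2 * d)^2 \<le> p^2 * (1 + 2 * d)^2" by (simp add: mult_right_mono)
  moreover have "A \<le> A * (1 - d) * (1 + 2 * d)^2"
    using mult_left_mono[OF expand, of A] A_pos by (simp add: mult.assoc)
  ultimately have "A \<le> (p * (1 + 2 * d))^2" by (simp add: power_mult_distrib)
  then have sqrt_A_le: "sqrt A \<le> p * (1 + 2 * d)"
    using assms d_nonneg by (intro real_le_lsqrt) auto
  have "sqrt c * x = sqrt (c * x^2)" using assms by (simp add: real_sqrt_mult)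
  also have "\<dots> \<le> sqrt A" using assms by (simp add: A_def)
  finally have "x^2 / (6 * sqrt A) \<le> x / (6 * sqrt c)"
    using assms A_pos by (simp add: field_simps power2_eq_square mult_left_mono)
  moreover have "1 / p \<le> 1 / sqrt A + x^2 / (6 * sqrt A)"
    using sqrt_A_le assms A_pos by (simp add: d_def field_simps)
  ultimately show ?thesis by (simp add: A_def)
qed

lemma time_le_by_substitution:
  fixes q qd G g :: "real \<Rightarrow> real"
  assumes "t0 < t1" and q_cont: "continuous_on {t0..t1} q"
    and q_deriv: "\<And>t. t0 < t \<Longrightarrow> t < t1 \<Longrightarrow> (q has_real_derivative qd t) (at t)"
    and G_deriv: "\<And>x. (G has_real_derivative g x) (at x)"
    and "\<And>t. t0 < t \<Longrightarrow> t < t1 \<Longrightarrow> 1 \<le> g (q t) * qd t"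
  shows "t1 - t0 \<le> G (q t1) - G (q t0)"
proof -
  have "continuous_on UNIV G"
    using G_deriv by (meson DERIV_isCont continuous_at_imp_continuous_on)
  then have "continuous_on {t0..t1} (\<lambda>t. G (q t))"
    using continuous_on_compose2[OF _ q_cont] by blast
  then show ?thesis
    using DERIV_ge_imp_diff_ge[of t0 t1 "\<lambda>t. G (q t)" "\<lambda>t. g (q t) * qd t" 1] assms
      DERIV_chain2[OF G_deriv q_deriv] by simp
qed

lemma time_ge_by_substitution:
  fixes q qd G g :: "real \<Rightarrow> real"
  assumes "t0 < t1" and q_cont: "continuous_on {t0..t1} q"
    and q_deriv: "\<And>t. t0 < t \<Longrightarrow> t < t1 \<Longrightarrow> (q has_real_derivative qd t) (at t)"
    and G_deriv: "\<And>x. (G has_real_derivative g x) (at x)"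
    and "\<And>t. t0 < t \<Longrightarrow> t < t1 \<Longrightarrow> g (q t) * qd t \<le> 1"
  shows "G (q t1) - G (q t0) \<le> t1 - t0"
proof -
  have "continuous_on UNIV G"
    using G_deriv by (meson DERIV_isCont continuous_at_imp_continuous_on)
  then have "continuous_on {t0..t1} (\<lambda>t. G (q t))"
    using continuous_on_compose2[OF _ q_cont] by blast
  then show ?thesis
    using DERIV_le_imp_diff_le[of t0 t1 "\<lambda>t. G (q t)" "\<lambda>t. g (q t) * qd t" 1] assms
      DERIV_chain2[OF G_deriv q_deriv] by simp
qed

lemma pendulum_hamiltonian_constant:
  assumes "pendulum_EL_solution \<sigma> q qd t0 t1" "s \<in> {t0<..<t1}" "t \<in> {t0<..<t1}"
  shows "pendulum_hamiltonian \<sigma> (q s) (qd s) = pendulum_hamiltonian \<sigma> (q t) (qd t)"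
proof -
  have "((\<lambda>t. pendulum_hamiltonian \<sigma> (q t) (qd t)) has_real_derivative 0) (at u)"
    if "u \<in> {t0<..<t1}" for u
  proof -
    have "((\<lambda>t. pendulum_hamiltonian \<sigma> (q t) (qd t)) has_real_derivative
            (1/2) * (2 * qd u * (\<sigma> * sin (q u))) - \<sigma> * (sin (q u) * qd u)) (at u)"
      using assms(1) that unfolding pendulum_EL_solution_def pendulum_hamiltonian_def
      by (auto intro!: derivative_eq_intros)
    then show ?thesis by (simp add: algebra_simps)
  qed
  moreover have "t0 < t1" using assms(2) by simp
  ultimately show ?thesis using DERIV_isconst3[OF _ assms(2,3)] by blast
qed

locale pendulum_crossing =
  fixes \<sigma> e t0 t1 :: real and q qd :: "real \<Rightarrow> real"
  assumes sigma_pos: "0 < \<sigma>" and before: "t0 < t1"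
    and solution: "pendulum_EL_solution \<sigma> q qd t0 t1"
    and start: "q t0 = 0" and finish: "q t1 = pi"
    and energy: "\<And>t. t0 < t \<Longrightarrow> t < t1 \<Longrightarrow> pendulum_hamiltonian \<sigma> (q t) (qd t) = e"
begin

lemma position_continuous: "continuous_on {t0..t1} q"
  and position_deriv: "t0 < t \<Longrightarrow> t < t1 \<Longrightarrow> (q has_real_derivative qd t) (at t)"
  and velocity_deriv: "t0 < t \<Longrightarrow> t < t1 \<Longrightarrow> (qd has_real_derivative \<sigma> * sin (q t)) (at t)"
  using solution by (auto simp: pendulum_EL_solution_def)

lemma velocity_squared:
  "t0 < t \<Longrightarrow> t < t1 \<Longrightarrow> (qd t)^2 = 2 * e + 2 * \<sigma> * (1 - cos (q t))"
  using energy[of t] by (simp add: pendulum_hamiltonian_def algebra_simps)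

lemma velocity_squared_le:
  assumes "t0 < t" "t < t1" shows "(qd t)^2 \<le> 2 * e + \<sigma> * (q t)^2"
  using velocity_squared[OF assms] one_minus_cos_le[of "q t"] sigma_pos
    mult_left_mono[of "1 - cos (q t)" "(q t)^2 / 2" \<sigma>]
  by simp

lemma velocity_squared_ge:
  assumes "t0 < t" "t < t1" shows "2 * e + \<sigma> * (q t)^2 - \<sigma> * (q t)^4 / 12 \<le> (qd t)^2"
  using velocity_squared[OF assms] one_minus_cos_ge[of "q t"] sigma_pos
    mult_left_mono[of "(q t)^2 / 2 - (q t)^4 / 24" "1 - cos (q t)" \<sigma>]
  by (simp add: algebra_simps)

lemma energy_pos: "0 < e"
proof (rule ccontr)
  assume "\<not> 0 < e"
  \<comment> \<open>Then \<open>\<bar>q'\<bar> \<le> sqrt \<sigma> \<bar>q\<bar>\<close>, so by Gronwall \<open>q\<^sup>2 exp (-2 sqrt \<sigma> t)\<close> cannot grow from \<open>0\<close> at \<open>t0\<close>.\<close>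
  then have speed: "\<bar>qd s\<bar> \<le> sqrt \<sigma> * \<bar>q s\<bar>" if "t0 < s" "s < t1" for s
    using velocity_squared_le[OF that] real_sqrt_le_mono[of "(qd s)^2" "\<sigma> * (q s)^2"]
    by (simp add: real_sqrt_mult)
  define W where "W s = (q s)^2 * exp (-2 * sqrt \<sigma> * s)" for s
  have "W t1 - W t0 \<le> 0 * (t1 - t0)"
  proof (rule DERIV_le_imp_diff_le[OF before])
    show "continuous_on {t0..t1} W"
      unfolding W_def by (intro continuous_intros position_continuous)
    fix s assume s: "t0 < s" "s < t1"
    show "(W has_real_derivative
            2 * exp (-2 * sqrt \<sigma> * s) * (q s * qd s - sqrt \<sigma> * (q s)^2)) (at s)"
      unfolding W_def[abs_def]
      by (auto intro!: derivative_eq_intros position_deriv[OF s] simp: algebra_simps)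
    have "q s * qd s \<le> \<bar>q s\<bar> * (sqrt \<sigma> * \<bar>q s\<bar>)"
      using speed[OF s] abs_mult[of "q s" "qd s"] abs_ge_self[of "q s * qd s"]
        mult_left_mono[of "\<bar>qd s\<bar>" "sqrt \<sigma> * \<bar>q s\<bar>" "\<bar>q s\<bar>"] by linarith
    then have "q s * qd s - sqrt \<sigma> * (q s)^2 \<le> 0"
      by (simp add: power2_eq_square abs_mult_self_eq algebra_simps)
    then show "2 * exp (-2 * sqrt \<sigma> * s) * (q s * qd s - sqrt \<sigma> * (q s)^2) \<le> 0"
      by (simp add: mult_nonneg_nonpos)
  qed
  moreover have "W t0 = 0" by (simp add: W_def start)
  moreover have "0 < W t1" by (simp add: W_def finish)
  ultimately show False by linarith
qed

lemma velocity_pos: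
  assumes "t0 < t" "t < t1" shows "0 < qd t"
proof (rule ccontr)
  assume "\<not> 0 < qd t"
  have nonzero: "qd s \<noteq> 0" if "t0 < s" "s < t1" for s
  proof -
    have "0 < 2 * e + 2 * \<sigma> * (1 - cos (q s))"
      using energy_pos sigma_pos cos_le_one[of "q s"] by (simp add: add_pos_nonneg)
    then show ?thesis using velocity_squared[OF that] by auto
  qed
  then have negative: "qd t < 0" using \<open>\<not> 0 < qd t\<close> assms by force
  have cont: "isCont qd s" if "t0 < s" "s < t1" for s
    using DERIV_isCont[OF velocity_deriv[OF that]] .
  obtain z where z: "t0 < z" "z < t1" "q t1 - q t0 = (t1 - t0) * qd z"
    using MVT[OF before position_continuous] position_deriv
    by (metis DERIV_unique real_differentiable_def)
  then have "0 < (t1 - t0) * qd z" using start finish by simp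
  then have "0 < qd z" using before by (simp add: zero_less_mult_iff)
  have "\<exists>x. min t z \<le> x \<and> x \<le> max t z \<and> qd x = 0"
  proof (cases "t \<le> z")
    case True
    then show ?thesis
      using IVT[of qd t 0 z] negative \<open>0 < qd z\<close> cont assms z by force
  next
    case False
    then show ?thesis
      using IVT2[of qd t 0 z] negative \<open>0 < qd z\<close> cont assms z by force
  qed
  then show False using nonzero assms z by force
qed

lemma position_mono:
  assumes "t0 \<le> s" "s \<le> s'" "s' \<le> t1" shows "q s \<le> q s'"
proof (cases "s = s'")
  case False
  have "0 * (s' - s) \<le> q s' - q s"
    using assms False
    by (intro DERIV_ge_imp_diff_ge[where f' = qd]
          continuous_on_subset[OF position_continuous] position_deriv
          less_imp_le[OF velocity_pos]) auto
  then show ?thesis by simp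
qed simp

lemma position_bounds: "t0 \<le> t \<Longrightarrow> t \<le> t1 \<Longrightarrow> 0 \<le> q t \<and> q t \<le> pi"
  using position_mono[of t0 t] position_mono[of t t1] start finish by simp

lemma crossing_time_le_free_motion: "t1 - t0 \<le> pi / sqrt (2 * e)"
proof -
  have "t1 - t0 \<le> q t1 / sqrt (2 * e) - q t0 / sqrt (2 * e)"
  proof (rule time_le_by_substitution[OF before position_continuous position_deriv])
    show "((\<lambda>x. x / sqrt (2 * e)) has_real_derivative 1 / sqrt (2 * e)) (at x)" for x
      using DERIV_cdivide[OF DERIV_ident, of "sqrt (2 * e)"] by simp
    fix t assume t: "t0 < t" "t < t1"
    have "2 * e \<le> (qd t)^2" using velocity_squared[OF t] sigma_pos cos_le_one[of "q t"] by simp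
    then have "sqrt (2 * e) \<le> qd t" using velocity_pos[OF t] by (intro real_le_lsqrt) auto
    then show "1 \<le> 1 / sqrt (2 * e) * qd t" using energy_pos by simp
  qed
  then show ?thesis by (simp add: start finish)
qed

lemma crossing_time_ge: "arsinh (sqrt (\<sigma> / (2 * e)) * pi) / sqrt \<sigma> \<le> t1 - t0"
proof -
  have "(\<lambda>x. arsinh (sqrt (\<sigma> / (2 * e)) * x) / sqrt \<sigma>) (q t1)
      - (\<lambda>x. arsinh (sqrt (\<sigma> / (2 * e)) * x) / sqrt \<sigma>) (q t0) \<le> t1 - t0"
  proof (rule time_ge_by_substitution[OF before position_continuous position_deriv])
    show "((\<lambda>x. arsinh (sqrt (\<sigma> / (2 * e)) * x) / sqrt \<sigma>) has_real_derivative
            1 / sqrt (2 * e + \<sigma> * x^2)) (at x)" for x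
      using DERIV_arsinh_scaled energy_pos sigma_pos by simp
    fix t assume t: "t0 < t" "t < t1"
    have "qd t \<le> sqrt (2 * e + \<sigma> * (q t)^2)"
      using velocity_squared_le[OF t] by (simp add: real_le_rsqrt)
    moreover have "0 < 2 * e + \<sigma> * (q t)^2"
      using energy_pos sigma_pos by (simp add: add_pos_nonneg)
    ultimately show "1 / sqrt (2 * e + \<sigma> * (q t)^2) * qd t \<le> 1" by simp
  qed
  then show ?thesis by (simp add: start finish)
qed

lemma crossing_time_le:
  "t1 - t0 \<le> arsinh (sqrt (\<sigma> / (2 * e)) * pi) / sqrt \<sigma> + pi^2 / (12 * sqrt \<sigma>)"
proof -
  define G where "G x = arsinh (sqrt (\<sigma> / (2 * e)) * x) / sqrt \<sigma> + x^2 / (12 * sqrt \<sigma>)" for x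
  have "t1 - t0 \<le> G (q t1) - G (q t0)"
  proof (rule time_le_by_substitution[OF before position_continuous position_deriv])
    show "(G has_real_derivative 1 / sqrt (2 * e + \<sigma> * x^2) + x / (6 * sqrt \<sigma>)) (at x)" for x
    proof -
      have "((\<lambda>x. x^2 / (12 * sqrt \<sigma>)) has_real_derivative 2 * x / (12 * sqrt \<sigma>)) (at x)"
        by (intro DERIV_cdivide) (auto intro!: derivative_eq_intros)
      then have "((\<lambda>x. x^2 / (12 * sqrt \<sigma>)) has_real_derivative x / (6 * sqrt \<sigma>)) (at x)"
        by simp
      then show ?thesis
        unfolding G_def[abs_def] using energy_pos sigma_pos
        by (intro DERIV_add DERIV_arsinh_scaled) auto
    qed
    fix t assume t: "t0 < t" "t < t1"
    have "0 \<le> q t" "q t \<le> pi" using position_bounds t by auto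
    then have "1 / qd t \<le> 1 / sqrt (2 * e + \<sigma> * (q t)^2) + q t / (6 * sqrt \<sigma>)"
      using energy_pos sigma_pos velocity_pos[OF t] velocity_squared_ge[OF t]
      by (intro inverse_le_of_quartic_lower_bound) auto
    then show "1 \<le> (1 / sqrt (2 * e + \<sigma> * (q t)^2) + q t / (6 * sqrt \<sigma>)) * qd t"
      using velocity_pos[OF t] by (simp add: field_simps)
  qed
  then show ?thesis by (simp add: G_def start finish)
qed

lemma energy_bounds:
  assumes slow: "pi < sqrt \<sigma> * (t1 - t0)"
  shows "2 * pi^2 * (\<sigma> * exp (-2 * sqrt \<sigma> * (t1 - t0))) \<le> e"
    and "e \<le> 9 * pi^2 / 2 * exp (pi^2 / 6) * (\<sigma> * exp (-2 * sqrt \<sigma> * (t1 - t0)))"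
proof -
  define y where "y = sqrt (\<sigma> / (2 * e)) * pi"
  define \<tau> where "\<tau> = sqrt \<sigma> * (t1 - t0)"
  have e_pos: "0 < e" by (rule energy_pos)
  have y_sq: "y^2 = pi^2 * \<sigma> / (2 * e)"
    using e_pos sigma_pos by (simp add: y_def power_mult_distrib)
  have "\<tau> \<le> sqrt \<sigma> * (pi / sqrt (2 * e))"
    unfolding \<tau>_def using crossing_time_le_free_motion sigma_pos by (intro mult_left_mono) auto
  also have "\<dots> = y" by (simp add: y_def real_sqrt_divide)
  finally have "1 \<le> y" using slow pi_ge_two by (simp add: \<tau>_def)
  have "ln (2 * y) \<le> \<tau>"
    using ln_two_mult_le_arsinh[of y] crossing_time_ge sigma_pos \<open>1 \<le> y\<close>
    by (simp add: \<tau>_def y_def pos_divide_le_eq mult.commute)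
  then have exp_ge: "2 * y \<le> exp \<tau>"
    using \<open>1 \<le> y\<close> exp_le_cancel_iff[of "ln (2 * y)" \<tau>] by simp
  have "\<tau> \<le> ln (3 * y) + pi^2 / 12"
    using arsinh_le_ln_three_mult[OF \<open>1 \<le> y\<close>] crossing_time_le sigma_pos
    by (simp add: \<tau>_def y_def field_simps)
  then have "exp \<tau> \<le> 3 * y * exp (pi^2 / 12)"
    using \<open>1 \<le> y\<close> exp_le_cancel_iff[of \<tau> "ln (3 * y) + pi^2 / 12"] by (simp add: exp_add)
  then have "(exp \<tau>)^2 \<le> (3 * y * exp (pi^2 / 12))^2" by (intro power_mono) auto
  also have "\<dots> = 9 * y^2 * exp (pi^2 / 6)" by (simp add: power_mult_distrib flip: exp_double)
  finally have exp_le: "(exp \<tau>)^2 \<le> 9 * y^2 * exp (pi^2 / 6)" .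
  define E where "E = exp (-2 * sqrt \<sigma> * (t1 - t0))"
  have exp_inv: "(exp \<tau>)^2 * E = 1"
    by (simp add: E_def \<tau>_def flip: exp_double exp_add)
  have "2 * pi^2 * (\<sigma> * E) = e * (2 * y)^2 * E"
    using e_pos by (simp add: y_sq power_mult_distrib)
  also have "\<dots> \<le> e * (exp \<tau>)^2 * E"
    using exp_ge \<open>1 \<le> y\<close> e_pos by (intro mult_right_mono mult_left_mono power_mono) (auto simp: E_def)
  also have "\<dots> = e" using exp_inv by (simp add: mult.assoc)
  finally show "2 * pi^2 * (\<sigma> * exp (-2 * sqrt \<sigma> * (t1 - t0))) \<le> e" by (simp add: E_def)
  have "e = e * (exp \<tau>)^2 * E" using exp_inv by (simp add: mult.assoc)
  also have "\<dots> \<le> e * (9 * y^2 * exp (pi^2 / 6)) * E"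
    using exp_le e_pos by (intro mult_right_mono mult_left_mono) (auto simp: E_def)
  also have "\<dots> = 9 * pi^2 / 2 * exp (pi^2 / 6) * (\<sigma> * E)"
    using e_pos by (simp add: y_sq)
  finally show "e \<le> 9 * pi^2 / 2 * exp (pi^2 / 6) * (\<sigma> * exp (-2 * sqrt \<sigma> * (t1 - t0)))"
    by (simp add: E_def)
qed

end

lemma pendulum_energy_asymptotics:
  assumes "0 < \<sigma>" "t0 < t1" "pendulum_EL_solution \<sigma> q qd t0 t1" "q t0 = 0" "q t1 = pi"
    and slow: "pi / (t1 - t0) < sqrt \<sigma>" and t: "t \<in> {t0<..<t1}"
  defines "g \<equiv> \<sigma> * exp (- (2 * pi) * sqrt \<sigma> / \<bar>pi / (t1 - t0)\<bar>)"
  shows "g / 1000 < pendulum_hamiltonian \<sigma> (q t) (qd t)"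
    and "pendulum_hamiltonian \<sigma> (q t) (qd t) < 1000 * g"
proof -
  interpret pendulum_crossing \<sigma> "pendulum_hamiltonian \<sigma> (q t) (qd t)" t0 t1 q qd
  proof
    show "\<And>s. t0 < s \<Longrightarrow> s < t1 \<Longrightarrow>
            pendulum_hamiltonian \<sigma> (q s) (qd s) = pendulum_hamiltonian \<sigma> (q t) (qd t)"
      using pendulum_hamiltonian_constant[OF assms(3) _ t] by simp
  qed (use assms in auto)
  have g_eq: "g = \<sigma> * exp (-2 * sqrt \<sigma> * (t1 - t0))"
    using \<open>t0 < t1\<close> by (simp add: g_def)
  have "0 < g" using \<open>0 < \<sigma>\<close> by (simp add: g_eq)
  have "pi < sqrt \<sigma> * (t1 - t0)" using slow \<open>t0 < t1\<close> by (simp add: field_simps)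
  note bounds = energy_bounds[OF this, folded g_eq]
  have "1 < pi^2 * 2000" using pi_ge_two power_mono[of 2 pi 2] by simp
  then have "g / 1000 < 2 * pi^2 * g" using \<open>0 < g\<close> by (simp add: field_simps)
  with bounds(1) show "g / 1000 < pendulum_hamiltonian \<sigma> (q t) (qd t)" by linarith
  have "exp (pi^2 / 6) \<le> exp 1 * exp 1" using pi_squared_le_10 by (simp add: mult_exp_exp)
  also have "\<dots> \<le> 3 * 3" using exp_le by (intro mult_mono) auto
  finally have "9 * pi^2 / 2 * exp (pi^2 / 6) < 1000"
    using pi_squared_le_10 mult_mono[of "pi^2" 10 "exp (pi^2 / 6)" 9] by simp
  then have "9 * pi^2 / 2 * exp (pi^2 / 6) * g < 1000 * g"
    using \<open>0 < g\<close> by (rule mult_strict_right_mono)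
  with bounds(2) show "pendulum_hamiltonian \<sigma> (q t) (qd t) < 1000 * g" by linarith
qed

theorem lemma2p2:
  fixes a \<epsilon> :: real
  assumes "a > 0" and "\<epsilon> > 0"
  shows "\<exists>C > 0. \<exists>C' > 1. \<forall>(n::nat) (t0::real) (t1::real) (q::real \<Rightarrow> real) (qd::real \<Rightarrow> real).
    n \<ge> 1 \<and> t0 < t1 \<and>
    pendulum_EL_solution (sigma_n a n) q qd t0 t1 \<and> q t0 = 0 \<and> q t1 = pi \<and>
    \<bar>pi / (t1 - t0)\<bar> < real n powr (- a / 2 - \<epsilon>)
    \<longrightarrow> (\<forall>t\<in>{t0<..<t1}.
          let e = pendulum_hamiltonian (sigma_n a n) (q t) (qd t);
              \<omega> = pi / (t1 - t0);
              g = sigma_n a n * exp (- C * sqrt (sigma_n a n) / \<bar>\<omega>\<bar>)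
          in g / C' < e \<and> e < C' * g)"
proof (rule exI[of _ "2 * pi"], intro conjI exI[of _ 1000] allI impI ballI)
  fix n :: nat and t0 t1 t :: real and q qd :: "real \<Rightarrow> real"
  assume H: "1 \<le> n \<and> t0 < t1 \<and> pendulum_EL_solution (sigma_n a n) q qd t0 t1 \<and>
    q t0 = 0 \<and> q t1 = pi \<and> \<bar>pi / (t1 - t0)\<bar> < real n powr (- a / 2 - \<epsilon>)"
    and t: "t \<in> {t0<..<t1}"
  have n: "1 \<le> real n" using H by simp
  have "sqrt (sigma_n a n) = real n powr (- a / 2)"
    using n by (simp add: sigma_n_def powr_half_sqrt[symmetric] powr_powr)
  also have "\<dots> \<ge> real n powr (- a / 2 - \<epsilon>)"
    using n \<open>\<epsilon> > 0\<close> by (intro powr_mono) auto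
  finally have "pi / (t1 - t0) < sqrt (sigma_n a n)" using H by linarith
  then show "let e = pendulum_hamiltonian (sigma_n a n) (q t) (qd t); \<omega> = pi / (t1 - t0);
          g = sigma_n a n * exp (- (2 * pi) * sqrt (sigma_n a n) / \<bar>\<omega>\<bar>)
        in g / 1000 < e \<and> e < 1000 * g"
    using pendulum_energy_asymptotics[of "sigma_n a n" t0 t1 q qd t] H n t
    by (simp add: Let_def sigma_n_def)
qed simp_all

end
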